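(* Let $k\ge 2$ and let $K_{n_1,\ldots,n_k}$ be the complete $k$-partite graph with parts $V_1,\ldots,V_k$ and vertex set $V=V_1\cup\cdots\cup V_k$, where $n_i=|V_i|\ge 2$ for all $1\le i\le k$. Then the diameter of the 1-skeleton of $\mathrm{CUT}(K_{n_1,\ldots,n_k})$ equals $2$.
   Context: For an undirected graph $G=(V,E)$ and $S\subseteq V$, $\delta(S)\subseteq E$ denotes the set of edges with exactly one endpoint in $S$, and $\mathbf v(S)\in\{0,1\}^{E}$ is its incidence vector ($v(S)_e=1$ iff $e\in\delta(S)$). The cut polytope is $\mathrm{CUT}(G)=\operatorname{conv}\{\mathbf v(S):S\subseteq V\}\subset\mathbb R^{E}$. The 1-skeleton of a polytope is the graph whose vertices are the polytope's vertices and whose edges are its one-dimensional faces; the diameter is the maximum shortest-path edge distance between two vertices of this graph. *)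

theory Defs
  imports "HOL-Analysis.Analysis" "HOL-Library.Extended_Nat"
begin

(* Edge coordinates are indexed by
   'v set (an edge {x,y} is a 2-element set); coordinates outside the edge set E
   are always 0, so R^E is embedded isometrically as a coordinate subspace of
   real ^ ('v set). *)

definition cut_vector :: "'v set set \<Rightarrow> 'v set \<Rightarrow> real ^ ('v::finite set)" where
  "cut_vector E S = (\<chi> e. if e \<in> E \<and> card (e \<inter> S) = 1 then 1 else 0)"

definition cut_polytope :: "'v set \<Rightarrow> 'v set set \<Rightarrow> (real ^ ('v::finite set)) set" where
  "cut_polytope V E = convex hull {cut_vector E S | S. S \<subseteq> V}"

definition skel_vertices :: "'a::euclidean_space set \<Rightarrow> 'a set" where
  "skel_vertices P = {x. x extreme_point_of P}"

definition skel_adj :: "'a::euclidean_space set \<Rightarrow> 'a \<Rightarrow> 'a \<Rightarrow> bool" where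
  "skel_adj P u v \<longleftrightarrow> u \<in> skel_vertices P \<and> v \<in> skel_vertices P \<and> u \<noteq> v \<and>
     (\<exists>F. F face_of P \<and> aff_dim F = 1 \<and> u \<in> F \<and> v \<in> F)"

definition skel_walk :: "'a::euclidean_space set \<Rightarrow> 'a \<Rightarrow> 'a \<Rightarrow> nat \<Rightarrow> bool" where
  "skel_walk P u v n \<longleftrightarrow> (\<exists>f. f 0 = u \<and> f n = v \<and> (\<forall>i<n. skel_adj P (f i) (f (Suc i))))"

definition skel_dist :: "'a::euclidean_space set \<Rightarrow> 'a \<Rightarrow> 'a \<Rightarrow> enat" where
  "skel_dist P u v = (if \<exists>n. skel_walk P u v n then enat (LEAST n. skel_walk P u v n) else \<infinity>)"

definition skel_diameter :: "'a::euclidean_space set \<Rightarrow> enat" where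
  "skel_diameter P = Sup {skel_dist P u v | u v. u \<in> skel_vertices P \<and> v \<in> skel_vertices P}"

definition multipartite_edges :: "nat \<Rightarrow> (nat \<Rightarrow> 'v set) \<Rightarrow> 'v set set" where
  "multipartite_edges k V = {{x, y} | x y. \<exists>i<k. \<exists>j<k. i \<noteq> j \<and> x \<in> V i \<and> y \<in> V j}"

end

theory Submission
  imports Defs
begin

text \<open>For 0/1 points u, w the linear functional with coefficients u + w - 1 is maximised,
over all 0/1 points, exactly at those agreeing with u wherever u and w agree; so this set spans a
face of any 0/1-polytope containing u and w. For cut vectors this gives the Barahona--Mahjoub
criterion: the cut vectors of S and W span an edge of the cut polytope when the symmetric
difference of S and W and its complement are both connected. In a complete multipartite graph
with at least two parts of size at least two, one intermediate cut suffices between any two cuts: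
flipping at most one chosen vertex in each of two parts makes the symmetric difference split both
parts. Conversely the cuts of the empty set and of two vertices of one part are not adjacent,
because their midpoint is also the midpoint of the cuts of the two single vertices.\<close>

lemma inner_agreement_bound:
  fixes u w x :: "real ^ 'n"
  assumes "\<forall>i. u$i \<in> {0,1}" "\<forall>i. w$i \<in> {0,1}" "\<forall>i. x$i \<in> {0,1}"
  shows "(u + w - 1) \<bullet> x \<le> u \<bullet> w"
    and "(u + w - 1) \<bullet> x = u \<bullet> w \<longleftrightarrow> (\<forall>i. u$i = w$i \<longrightarrow> x$i = u$i)"
proof -
  have gap: "0 \<le> u$i * w$i - (u$i + w$i - 1) * x$i"
    "u$i * w$i - (u$i + w$i - 1) * x$i = 0 \<longleftrightarrow> (u$i = w$i \<longrightarrow> x$i = u$i)" for i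
    using assms by (auto dest!: spec[of _ i])
  have diff: "u \<bullet> w - (u + w - 1) \<bullet> x = (\<Sum>i\<in>UNIV. u$i * w$i - (u$i + w$i - 1) * x$i)"
    by (simp add: inner_vec_def sum_subtractf)
  have "0 \<le> (\<Sum>i\<in>UNIV. u$i * w$i - (u$i + w$i - 1) * x$i)"
    by (rule sum_nonneg) (rule gap(1))
  then show "(u + w - 1) \<bullet> x \<le> u \<bullet> w"
    unfolding diff[symmetric] by simp
  have "(\<Sum>i\<in>UNIV. u$i * w$i - (u$i + w$i - 1) * x$i) = 0 \<longleftrightarrow> (\<forall>i. u$i = w$i \<longrightarrow> x$i = u$i)"
  proof -
    have "(\<Sum>i\<in>UNIV. u$i * w$i - (u$i + w$i - 1) * x$i) = 0 \<longleftrightarrow>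
          (\<forall>i\<in>UNIV. u$i * w$i - (u$i + w$i - 1) * x$i = 0)"
      using gap(1) by (intro sum_nonneg_eq_0_iff) auto
    then show ?thesis by (simp only: gap(2)) simp
  qed
  then show "(u + w - 1) \<bullet> x = u \<bullet> w \<longleftrightarrow> (\<forall>i. u$i = w$i \<longrightarrow> x$i = u$i)"
    unfolding diff[symmetric] by (metis eq_iff_diff_eq_0)
qed

lemma face_of_zero_one_hull_agreeing:
  fixes A :: "(real ^ 'n) set"
  assumes A: "finite A" "\<forall>x\<in>A. \<forall>i. x$i \<in> {0,1}" and u: "u \<in> A" and w: "w \<in> A"
  shows "convex hull {x\<in>A. \<forall>i. u$i = w$i \<longrightarrow> x$i = u$i} face_of convex hull A"
proof -
  let ?agree = "\<lambda>x. \<forall>i. u$i = w$i \<longrightarrow> x$i = u$i"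
  have on_hyperplane: "(u + w - 1) \<bullet> x = u \<bullet> w \<longleftrightarrow> ?agree x" if "x \<in> A" for x
    by (rule inner_agreement_bound(2)) (use A(2) u w that in auto)
  have "A \<subseteq> {x. (u + w - 1) \<bullet> x \<le> u \<bullet> w}"
    using A(2) u w by (auto intro: inner_agreement_bound(1))
  then have "convex hull A \<subseteq> {x. (u + w - 1) \<bullet> x \<le> u \<bullet> w}"
    by (rule hull_minimal) (simp add: convex_halfspace_le)
  then have face: "convex hull A \<inter> {x. (u + w - 1) \<bullet> x = u \<bullet> w} face_of convex hull A"
    (is "?F face_of _")
    by (intro face_of_Int_supporting_hyperplane_le) auto
  obtain B where B: "B \<subseteq> A" "?F = convex hull B"
    using face_of_convex_hull_subset[OF finite_imp_compact[OF A(1)] face] by blast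
  have "B \<subseteq> {x\<in>A. ?agree x}"
  proof
    fix x assume "x \<in> B"
    then have "x \<in> ?F" unfolding B(2) by (rule hull_inc)
    with on_hyperplane show "x \<in> {x\<in>A. ?agree x}" using B(1) \<open>x \<in> B\<close> by auto
  qed
  then have "?F \<subseteq> convex hull {x\<in>A. ?agree x}"
    unfolding B(2) by (rule hull_mono)
  moreover have "{x\<in>A. ?agree x} \<subseteq> ?F"
    using on_hyperplane by (auto intro: hull_inc)
  then have "convex hull {x\<in>A. ?agree x} \<subseteq> ?F"
    using face_of_imp_convex[OF face] by (rule hull_minimal)
  ultimately have "?F = convex hull {x\<in>A. ?agree x}" by (rule subset_antisym)
  with face show ?thesis by simp
qed

lemma extreme_point_of_zero_one_hull:
  fixes A :: "(real ^ 'n) set"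
  assumes "finite A" "\<forall>x\<in>A. \<forall>i. x$i \<in> {0,1}" "u \<in> A"
  shows "u extreme_point_of convex hull A"
proof -
  have "{x\<in>A. \<forall>i. u$i = u$i \<longrightarrow> x$i = u$i} = {u}"
    using assms(3) by (auto simp: vec_eq_iff)
  then show ?thesis
    using face_of_zero_one_hull_agreeing[OF assms assms(3)] by (simp add: face_of_singleton)
qed

lemma skel_vertices_zero_one_hull:
  fixes A :: "(real ^ 'n) set"
  assumes "finite A" "\<forall>x\<in>A. \<forall>i. x$i \<in> {0,1}"
  shows "skel_vertices (convex hull A) = A"
  using extreme_point_of_zero_one_hull[OF assms] extreme_point_of_convex_hull
  unfolding skel_vertices_def by blast

lemma skel_adj_zero_one_hullI:
  fixes A :: "(real ^ 'n) set"
  assumes A: "finite A" "\<forall>x\<in>A. \<forall>i. x$i \<in> {0,1}" and "u \<in> A" "w \<in> A" "u \<noteq> w"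
    and only: "\<And>x. x \<in> A \<Longrightarrow> \<forall>i. u$i = w$i \<longrightarrow> x$i = u$i \<Longrightarrow> x = u \<or> x = w"
  shows "skel_adj (convex hull A) u w"
proof -
  have "{x\<in>A. \<forall>i. u$i = w$i \<longrightarrow> x$i = u$i} = {u, w}"
    using only assms(3,4) by auto
  then have "convex hull {u, w} face_of convex hull A"
    using face_of_zero_one_hull_agreeing[OF A assms(3,4)] by simp
  moreover have "aff_dim (convex hull {u, w}) = 1"
    using \<open>u \<noteq> w\<close> by (simp add: aff_dim_convex_hull)
  ultimately show ?thesis
    unfolding skel_adj_def skel_vertices_zero_one_hull[OF A]
    using assms(3-5) hull_inc[of _ "{u, w}"] by blast
qed

lemma not_skel_adj_parallelogram:
  fixes u v w z :: "'a::euclidean_space"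
  assumes ext: "u extreme_point_of P" "v extreme_point_of P" "w extreme_point_of P"
    and "z \<in> P" and sum: "u + v = w + z"
    and distinct: "u \<noteq> v" "w \<noteq> u" "w \<noteq> v" "w \<noteq> z"
  shows "\<not> skel_adj P u v"
proof
  assume "skel_adj P u v"
  then obtain F where F: "F face_of P" "aff_dim F = 1" "u \<in> F" "v \<in> F"
    unfolding skel_adj_def by blast
  have inP: "u \<in> P" "v \<in> P" "w \<in> P" using ext by (auto simp: extreme_point_of_def)
  have "midpoint u v \<in> F"
    using face_of_imp_convex[OF F(1)] F(3,4) midpoint_in_closed_segment convex_contains_segment
    by blast
  moreover have "midpoint u v = midpoint w z"
    using sum by (simp add: midpoint_def)
  then have "midpoint u v \<in> open_segment w z"
    using \<open>w \<noteq> z\<close> by simp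
  ultimately have "w \<in> F"
    using face_ofD[OF F(1) _ inP(3) \<open>z \<in> P\<close>] by blast
  then have "aff_dim {u, v, w} \<le> 1"
    using F by (metis aff_dim_subset empty_subsetI insert_subset)
  then have "between (v, w) u \<or> between (w, u) v \<or> between (u, v) w"
    by (simp add: collinear_aff_dim[symmetric] collinear_between_cases)
  moreover have "\<not> between (a, b) c" if "c extreme_point_of P" "a \<in> P" "b \<in> P" "c \<noteq> a" "c \<noteq> b"
    for a b c
    using that unfolding between_mem_segment extreme_point_of_def open_segment_def by blast
  ultimately show False
    using ext inP distinct by metis
qed

lemma skel_dist_le_walk: "skel_walk P u v n \<Longrightarrow> skel_dist P u v \<le> enat n"
  unfolding skel_dist_def by (auto intro: Least_le)

lemma skel_dist_le_1:
  assumes "skel_adj P u v"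
  shows "skel_dist P u v \<le> 1"
proof -
  have "skel_walk P u v 1"
    unfolding skel_walk_def using assms by (intro exI[of _ "\<lambda>i. if i = 0 then u else v"]) auto
  then show ?thesis using skel_dist_le_walk one_enat_def by metis
qed

lemma skel_dist_le_2:
  assumes "skel_adj P u w" "skel_adj P w v"
  shows "skel_dist P u v \<le> 2"
proof -
  have "skel_walk P u v 2"
    unfolding skel_walk_def using assms
    by (intro exI[of _ "\<lambda>i. if i = 0 then u else if i = 1 then w else v"])
      (auto simp: less_2_cases_iff)
  then show ?thesis using skel_dist_le_walk numeral_eq_enat by metis
qed

lemma skel_dist_ge_2:
  assumes "u \<noteq> v" "\<not> skel_adj P u v"
  shows "2 \<le> skel_dist P u v"
proof -
  have "2 \<le> n" if "skel_walk P u v n" for n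
    using that assms unfolding skel_walk_def
    by (metis One_nat_def less_2_cases_iff not_less lessI)
  then show ?thesis
    unfolding skel_dist_def numeral_eq_enat by (auto intro: LeastI2_ex)
qed

lemma skel_diameter_eqI:
  assumes "\<And>u v. u \<in> skel_vertices P \<Longrightarrow> v \<in> skel_vertices P \<Longrightarrow> skel_dist P u v \<le> d"
    and "u \<in> skel_vertices P" "v \<in> skel_vertices P" "d \<le> skel_dist P u v"
  shows "skel_diameter P = d"
  unfolding skel_diameter_def
  by (rule antisym, (rule Sup_least; use assms(1) in blast),
      (rule order_trans[OF assms(4) Sup_upper]; use assms(2,3) in blast))

definition connected_in :: "'v set set \<Rightarrow> 'v set \<Rightarrow> bool" where
  "connected_in E Z \<longleftrightarrow> (\<forall>p\<in>Z. \<forall>q\<in>Z. (\<lambda>x y. x \<in> Z \<and> y \<in> Z \<and> {x, y} \<in> E)\<^sup>*\<^sup>* p q)"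

lemma connected_in_const:
  assumes "connected_in E Z" and "\<And>p q. p \<in> Z \<Longrightarrow> q \<in> Z \<Longrightarrow> {p, q} \<in> E \<Longrightarrow> f p = f q"
    and "p \<in> Z" "q \<in> Z"
  shows "f p = f q"
proof -
  have "(\<lambda>x y. x \<in> Z \<and> y \<in> Z \<and> {x, y} \<in> E)\<^sup>*\<^sup>* p q"
    using assms(1,3,4) unfolding connected_in_def by blast
  then show ?thesis by induction (use assms(2) in auto)
qed

lemma connected_in_subset_edge:
  assumes "{x, y} \<in> E" "Z \<subseteq> {x, y}"
  shows "connected_in E Z"
  unfolding connected_in_def
proof (intro ballI)
  fix p q assume "p \<in> Z" "q \<in> Z"
  then have "p = q \<or> {p, q} = {x, y}" using assms(2) by auto
  then show "(\<lambda>x y. x \<in> Z \<and> y \<in> Z \<and> {x, y} \<in> E)\<^sup>*\<^sup>* p q"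
    using assms(1) \<open>p \<in> Z\<close> \<open>q \<in> Z\<close> by (auto intro: r_into_rtranclp)
qed

lemma cut_vector_empty: "cut_vector E {} = 0"
  by (simp add: cut_vector_def vec_eq_iff)

lemma cut_vector_edge:
  assumes "{p, q} \<in> E" "p \<noteq> q"
  shows "cut_vector E A $ {p, q} = (if (p \<in> A) \<noteq> (q \<in> A) then 1 else 0)"
proof -
  have "card ({p, q} \<inter> A) = 1 \<longleftrightarrow> (p \<in> A) \<noteq> (q \<in> A)"
    using \<open>p \<noteq> q\<close> by (cases "p \<in> A"; cases "q \<in> A") (auto simp: Int_insert_left)
  then show ?thesis using assms(1) by (simp add: cut_vector_def)
qed

lemma cut_vector_edge_eq_iff:
  assumes "{p, q} \<in> E" "p \<noteq> q"
  shows "cut_vector E A $ {p, q} = cut_vector E B $ {p, q} \<longleftrightarrow>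
    (p \<in> sym_diff A B \<longleftrightarrow> q \<in> sym_diff A B)"
  using assms by (auto simp: cut_vector_edge)

lemma cut_vector_eq_iff:
  assumes "\<forall>e\<in>E. card e = 2"
  shows "cut_vector E A = cut_vector E B \<longleftrightarrow>
    (\<forall>p q. {p, q} \<in> E \<longrightarrow> (p \<in> sym_diff A B \<longleftrightarrow> q \<in> sym_diff A B))"
proof -
  have pointwise: "cut_vector E A $ e = cut_vector E B $ e \<longleftrightarrow>
      (e \<in> E \<longrightarrow> (\<forall>p q. e = {p, q} \<longrightarrow> (p \<in> sym_diff A B \<longleftrightarrow> q \<in> sym_diff A B)))" for e
  proof (cases "e \<in> E")
    case True
    then obtain p q where "e = {p, q}" "p \<noteq> q" using assms by (meson card_2_iff)
    then show ?thesis
      using cut_vector_edge_eq_iff[of p q E A B] True by (auto simp: doubleton_eq_iff)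
  qed (simp add: cut_vector_def)
  then show ?thesis
    unfolding vec_eq_iff by blast
qed

lemma cut_vector_Un:
  assumes "A \<inter> B = {}" "\<forall>e\<in>E. e \<inter> A = {} \<or> e \<inter> B = {}"
  shows "cut_vector E (A \<union> B) = cut_vector E A + cut_vector E B"
proof -
  have "card (e \<inter> (A \<union> B)) = card (e \<inter> A) + card (e \<inter> B)" for e :: "'a set"
    using assms(1) by (subst card_Un_disjoint[symmetric]) (auto simp: Int_Un_distrib)
  then show ?thesis
    using assms(2) by (auto simp: cut_vector_def vec_eq_iff)
qed

lemma cut_vector_agreeing_cases:
  assumes E: "\<And>e. e \<in> E \<Longrightarrow> card e = 2 \<and> e \<subseteq> V"
    and conn: "connected_in E (sym_diff S W)" "connected_in E (V - sym_diff S W)"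
    and agree: "\<forall>e. cut_vector E S $ e = cut_vector E W $ e \<longrightarrow> cut_vector E X $ e = cut_vector E S $ e"
  shows "cut_vector E X = cut_vector E S \<or> cut_vector E X = cut_vector E W"
proof -
  let ?D = "sym_diff S W"
  have edge: "p \<noteq> q" "p \<in> V" "q \<in> V" if "{p, q} \<in> E" for p q
    using E[OF that] by auto
  have E2: "\<forall>e\<in>E. card e = 2" using E by blast
  have on_edge: "p \<in> sym_diff X S \<longleftrightarrow> q \<in> sym_diff X S"
    if "{p, q} \<in> E" "p \<in> ?D \<longleftrightarrow> q \<in> ?D" for p q
    using agree that cut_vector_edge_eq_iff[OF that(1) edge(1)[OF that(1)]] by metis
  have const: "p \<in> sym_diff X S \<longleftrightarrow> q \<in> sym_diff X S"
    if "p \<in> V" "q \<in> V" "p \<in> ?D \<longleftrightarrow> q \<in> ?D" for p q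
  proof (cases "p \<in> ?D")
    case True
    then show ?thesis
      using connected_in_const[OF conn(1), of "\<lambda>z. z \<in> sym_diff X S"] on_edge that by blast
  next
    case False
    then show ?thesis
      using connected_in_const[OF conn(2), of "\<lambda>z. z \<in> sym_diff X S"] on_edge that by blast
  qed
  \<comment> \<open>So sym_diff X S is constant on ?D and on V - ?D. If it differs on the two sides,
      then sym_diff X W, which is sym_diff X S with ?D flipped, is constant on V.\<close>
  show ?thesis
  proof (cases "\<forall>p q. {p, q} \<in> E \<longrightarrow> (p \<in> sym_diff X S \<longleftrightarrow> q \<in> sym_diff X S)")
    case True
    then show ?thesis using cut_vector_eq_iff[OF E2] by blast
  next
    case False
    then obtain p q where pq: "{p, q} \<in> E" "\<not> (p \<in> sym_diff X S \<longleftrightarrow> q \<in> sym_diff X S)"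
      by blast
    then have "\<not> (p \<in> ?D \<longleftrightarrow> q \<in> ?D)" using const edge by blast
    then have "z \<in> sym_diff X W \<longleftrightarrow> p \<in> sym_diff X W" if "z \<in> V" for z
      using const[OF that edge(2)[OF pq(1)]] const[OF that edge(3)[OF pq(1)]] pq(2) by blast
    then have "\<forall>p q. {p, q} \<in> E \<longrightarrow> (p \<in> sym_diff X W \<longleftrightarrow> q \<in> sym_diff X W)"
      using edge by blast
    then show ?thesis using cut_vector_eq_iff[OF E2] by blast
  qed
qed

lemma skel_vertices_cut_polytope:
  "skel_vertices (cut_polytope V E) = {cut_vector E S | S. S \<subseteq> V}"
proof -
  have "{cut_vector E S | S. S \<subseteq> V} = cut_vector E ` Pow V" by auto
  then show ?thesis
    unfolding cut_polytope_def
    by (intro skel_vertices_zero_one_hull) (auto simp: cut_vector_def)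
qed

lemma skel_adj_cut_polytopeI:
  assumes E: "\<And>e. e \<in> E \<Longrightarrow> card e = 2 \<and> e \<subseteq> V"
    and "S \<subseteq> V" "W \<subseteq> V" "cut_vector E S \<noteq> cut_vector E W"
    and "connected_in E (sym_diff S W)" "connected_in E (V - sym_diff S W)"
  shows "skel_adj (cut_polytope V E) (cut_vector E S) (cut_vector E W)"
proof -
  have "{cut_vector E S | S. S \<subseteq> V} = cut_vector E ` Pow V" by auto
  then have "finite {cut_vector E S | S. S \<subseteq> V}" by simp
  then show ?thesis
    unfolding cut_polytope_def
  proof (rule skel_adj_zero_one_hullI)
    fix x assume "x \<in> {cut_vector E S | S. S \<subseteq> V}"
      "\<forall>i. cut_vector E S $ i = cut_vector E W $ i \<longrightarrow> x $ i = cut_vector E S $ i"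
    then show "x = cut_vector E S \<or> x = cut_vector E W"
      using cut_vector_agreeing_cases[OF E assms(5,6)] by blast
  qed (use assms in \<open>auto simp: cut_vector_def\<close>)
qed

locale complete_multipartite =
  fixes k :: nat and V :: "nat \<Rightarrow> 'v::finite set"
  assumes two_parts: "2 \<le> k"
    and parts_disjoint: "\<And>i j. i < k \<Longrightarrow> j < k \<Longrightarrow> i \<noteq> j \<Longrightarrow> V i \<inter> V j = {}"
    and part_card: "\<And>i. i < k \<Longrightarrow> 2 \<le> card (V i)"
begin

abbreviation vertices :: "'v set" where
  "vertices \<equiv> \<Union>i<k. V i"

abbreviation edges :: "'v set set" where
  "edges \<equiv> multipartite_edges k V"

definition cross :: "'v \<Rightarrow> 'v \<Rightarrow> bool" where
  "cross p q \<longleftrightarrow> (\<exists>i<k. \<exists>j<k. i \<noteq> j \<and> p \<in> V i \<and> q \<in> V j)"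

lemma crossI: "i < k \<Longrightarrow> j < k \<Longrightarrow> i \<noteq> j \<Longrightarrow> p \<in> V i \<Longrightarrow> q \<in> V j \<Longrightarrow> cross p q"
  unfolding cross_def by blast

lemma not_cross_same_part: "i < k \<Longrightarrow> p \<in> V i \<Longrightarrow> q \<in> V i \<Longrightarrow> \<not> cross p q"
  unfolding cross_def using parts_disjoint by blast

lemma cross_irrefl: "\<not> cross p p"
  unfolding cross_def using parts_disjoint by blast

lemma part_two_elements:
  assumes "i < k"
  obtains a b where "a \<in> V i" "b \<in> V i" "a \<noteq> b"
  using card_le_Suc0_iff_eq[of "V i"] part_card[OF assms] by force

lemma edge_iff_cross: "{p, q} \<in> edges \<longleftrightarrow> cross p q"
  unfolding multipartite_edges_def cross_def by (auto simp: doubleton_eq_iff)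

lemma edges_wellformed:
  assumes "e \<in> edges"
  shows "card e = 2 \<and> e \<subseteq> vertices"
proof -
  obtain i j p q where "e = {p, q}" "i < k" "j < k" "i \<noteq> j" "p \<in> V i" "q \<in> V j"
    using assms unfolding multipartite_edges_def by blast
  moreover have "p \<noteq> q" using calculation parts_disjoint by blast
  ultimately show ?thesis by auto
qed

lemma connected_in_crossing:
  assumes "Z \<subseteq> vertices" "x \<in> Z" "y \<in> Z" "cross x y"
  shows "connected_in edges Z"
  unfolding connected_in_def
proof (intro ballI)
  let ?adj = "\<lambda>p q. p \<in> Z \<and> q \<in> Z \<and> {p, q} \<in> edges"
  fix p q assume "p \<in> Z" "q \<in> Z"
  then obtain i j where ij: "i < k" "p \<in> V i" "j < k" "q \<in> V j" using assms(1) by blast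
  show "?adj\<^sup>*\<^sup>* p q"
  proof (cases "i = j")
    case False
    then have "?adj p q" using ij \<open>p \<in> Z\<close> \<open>q \<in> Z\<close> by (auto simp: edge_iff_cross intro: crossI)
    then show ?thesis by (rule r_into_rtranclp)
  next
    case True
    obtain m z where z: "m < k" "m \<noteq> i" "z \<in> V m" "z \<in> Z"
      using assms(2-4) unfolding cross_def by metis
    have "?adj p z" "?adj z q"
      using z ij True \<open>p \<in> Z\<close> \<open>q \<in> Z\<close> by (auto simp: edge_iff_cross intro: crossI)
    then show ?thesis by (rule converse_rtranclp_into_rtranclp[OF _ r_into_rtranclp])
  qed
qed

lemma skel_adj_crossing_split:
  assumes "S \<subseteq> vertices" "W \<subseteq> vertices"
    and "x \<in> sym_diff S W" "y \<in> vertices - sym_diff S W" "cross x y"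
    and "connected_in edges (sym_diff S W)" "connected_in edges (vertices - sym_diff S W)"
  shows "skel_adj (cut_polytope vertices edges) (cut_vector edges S) (cut_vector edges W)"
proof (rule skel_adj_cut_polytopeI[OF edges_wellformed assms(1,2) _ assms(6,7)])
  have "{x, y} \<in> edges" "x \<noteq> y"
    using assms(3,4) \<open>cross x y\<close> by (auto simp: edge_iff_cross)
  then show "cut_vector edges S \<noteq> cut_vector edges W"
    using cut_vector_edge_eq_iff assms(3,4) by (metis Diff_iff)
qed

lemma skel_adj_splitting_two_parts:
  assumes "i < k" "j < k" "i \<noteq> j" "a \<in> V i" "b \<in> V i" "c \<in> V j" "d \<in> V j"
    and "S \<subseteq> vertices" "W \<subseteq> vertices"
    and "a \<in> sym_diff S W \<longleftrightarrow> b \<notin> sym_diff S W" "c \<in> sym_diff S W \<longleftrightarrow> d \<notin> sym_diff S W"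
  shows "skel_adj (cut_polytope vertices edges) (cut_vector edges S) (cut_vector edges W)"
proof -
  let ?D = "sym_diff S W"
  obtain x y where xy: "x \<in> V i" "y \<in> V i" "x \<in> ?D" "y \<notin> ?D"
    using assms(4,5,10) by metis
  obtain x' y' where xy': "x' \<in> V j" "y' \<in> V j" "x' \<in> ?D" "y' \<notin> ?D"
    using assms(6,7,11) by metis
  have cross: "cross p q" if "p \<in> V i" "q \<in> V j" for p q
    using crossI[OF assms(1-3) that] .
  have in_vertices: "V i \<subseteq> vertices" "V j \<subseteq> vertices" using assms(1,2) by auto
  show ?thesis
  proof (rule skel_adj_crossing_split[OF assms(8,9) xy(3) _ cross[OF xy(1) xy'(2)]])
    show "y' \<in> vertices - ?D" using xy' in_vertices by blast
    show "connected_in edges ?D"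
      using assms(8,9) xy xy' cross by (intro connected_in_crossing[of _ x x']) auto
    show "connected_in edges (vertices - ?D)"
      using xy xy' cross in_vertices by (intro connected_in_crossing[of _ y y']) auto
  qed
qed

lemma skel_dist_cut_vectors_le_2:
  assumes S: "S \<subseteq> vertices" and T: "T \<subseteq> vertices"
  shows "skel_dist (cut_polytope vertices edges) (cut_vector edges S) (cut_vector edges T) \<le> 2"
proof -
  let ?P = "cut_polytope vertices edges" and ?D = "sym_diff S T"
  have parts: "0 < k" "1 < k" using two_parts by auto
  obtain a0 b0 where ab0: "a0 \<in> V 0" "b0 \<in> V 0" "a0 \<noteq> b0"
    using part_two_elements[OF parts(1)] .
  obtain a1 b1 where ab1: "a1 \<in> V 1" "b1 \<in> V 1" "a1 \<noteq> b1"
    using part_two_elements[OF parts(2)] .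
  have cross: "cross p q" "cross q p" if "p \<in> V 0" "q \<in> V 1" for p q
    using crossI[OF parts, of p q] crossI[OF parts(2,1), of q p] that by auto
  have distinct: "a0 \<noteq> a1" "a0 \<noteq> b1" "b0 \<noteq> a1" "b0 \<noteq> b1"
    using parts_disjoint[OF parts] ab0 ab1 by auto
  have in_vertices: "a0 \<in> vertices" "b0 \<in> vertices" "a1 \<in> vertices" "b1 \<in> vertices"
    using ab0 ab1 parts by auto
  \<comment> \<open>Flip a0 (resp. a1) when sym_diff S T does not separate it from b0 (resp. b1);
      then sym_diff W T splits both parts.\<close>
  define X where "X = {a. (a = a0 \<and> (a0 \<in> ?D \<longleftrightarrow> b0 \<in> ?D)) \<or> (a = a1 \<and> (a1 \<in> ?D \<longleftrightarrow> b1 \<in> ?D))}"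
  define W where "W = sym_diff S X"
  have X: "X \<subseteq> {a0, a1}" and W: "W \<subseteq> vertices"
    using S in_vertices by (auto simp: X_def W_def)
  have WT: "skel_adj ?P (cut_vector edges W) (cut_vector edges T)"
    by (rule skel_adj_splitting_two_parts[OF parts zero_neq_one ab0(1,2) ab1(1,2) W T])
      (use distinct ab0(3) ab1(3) in \<open>auto simp: X_def W_def\<close>)
  show ?thesis
  proof (cases "X = {}")
    case True
    then have "W = S" by (simp add: W_def)
    then show ?thesis
      using skel_dist_le_1[OF WT] by (simp add: order_trans[OF _ one_le_numeral])
  next
    case False
    then obtain x where "x \<in> X" by blast
    have "{a0, a1} \<in> edges" using cross ab0 ab1 by (simp add: edge_iff_cross)
    then have "connected_in edges X" using X by (rule connected_in_subset_edge)
    moreover have "connected_in edges (vertices - X)"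
      using X distinct ab0 ab1 in_vertices cross by (intro connected_in_crossing[of _ b0 b1]) auto
    moreover have "x \<in> {a0, a1}" "b0 \<notin> X" "b1 \<notin> X"
      using X \<open>x \<in> X\<close> distinct ab0(3) ab1(3) by auto
    then have "(if x = a0 then b1 else b0) \<in> vertices - X" "cross x (if x = a0 then b1 else b0)"
      using in_vertices ab0 ab1 cross by auto
    moreover have "sym_diff S W = X" by (auto simp: W_def)
    ultimately have "skel_adj ?P (cut_vector edges S) (cut_vector edges W)"
      using skel_adj_crossing_split[OF S W] \<open>x \<in> X\<close> by metis
    then show ?thesis using WT by (rule skel_dist_le_2)
  qed
qed

lemma skel_dist_cut_vectors_ge_2:
  assumes "i < k" "a \<in> V i" "b \<in> V i" "a \<noteq> b"
  shows "2 \<le> skel_dist (cut_polytope vertices edges) (cut_vector edges {}) (cut_vector edges {a, b})"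
proof -
  let ?P = "cut_polytope vertices edges" and ?cv = "cut_vector edges"
  obtain j where j: "j < k" "j \<noteq> i"
    using two_parts by (intro that[of "if i = 0 then 1 else 0"]) auto
  obtain c where c: "c \<in> V j" using part_two_elements[OF j(1)] by metis
  have "cross a c" "cross b c" using crossI[OF assms(1) j(1) j(2)[symmetric]] assms c by auto
  then have crossing: "{a, c} \<in> edges" "{b, c} \<in> edges" "a \<noteq> c" "b \<noteq> c"
    using cross_irrefl by (auto simp: edge_iff_cross)
  have no_edge_ab: "e \<inter> {a} = {} \<or> e \<inter> {b} = {}" if "e \<in> edges" for e
  proof -
    obtain p q where "e = {p, q}" "cross p q"
      using \<open>e \<in> edges\<close> unfolding multipartite_edges_def cross_def by blast
    then show ?thesis
      using not_cross_same_part[OF assms(1)] assms(2-4) by (auto simp: doubleton_eq_iff)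
  qed
  have "?cv {} + ?cv {a, b} = ?cv {a} + ?cv {b}"
    using cut_vector_Un[of "{a}" "{b}" edges] no_edge_ab assms(4)
    by (simp add: cut_vector_empty insert_commute)
  moreover have "?cv {} \<noteq> ?cv {a, b}" "?cv {a} \<noteq> ?cv {}" "?cv {a} \<noteq> ?cv {a, b}" "?cv {a} \<noteq> ?cv {b}"
    using cut_vector_edge[OF crossing(1,3)] cut_vector_edge[OF crossing(2,4)] assms(4) crossing(3,4)
    by (metis empty_iff insert_iff zero_neq_one)+
  moreover have "?cv S extreme_point_of ?P" if "S \<subseteq> vertices" for S
    using skel_vertices_cut_polytope that unfolding skel_vertices_def by blast
  moreover have "a \<in> vertices" "b \<in> vertices" using assms by auto
  ultimately show ?thesis
    by (intro skel_dist_ge_2 not_skel_adj_parallelogram[of "?cv {}" ?P _ "?cv {a}" "?cv {b}"])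
      (auto simp: extreme_point_of_def)
qed

lemma skel_diameter_cut_polytope: "skel_diameter (cut_polytope vertices edges) = 2"
proof -
  have "0 < k" using two_parts by simp
  then obtain a b where ab: "a \<in> V 0" "b \<in> V 0" "a \<noteq> b" by (rule part_two_elements)
  show ?thesis
  proof (rule skel_diameter_eqI[where u = "cut_vector edges {}" and v = "cut_vector edges {a, b}"])
    show "skel_dist (cut_polytope vertices edges) u v \<le> 2"
      if "u \<in> skel_vertices (cut_polytope vertices edges)"
         "v \<in> skel_vertices (cut_polytope vertices edges)" for u v
      using that skel_dist_cut_vectors_le_2 by (auto simp: skel_vertices_cut_polytope)
  qed (use skel_dist_cut_vectors_ge_2[OF \<open>0 < k\<close> ab] ab \<open>0 < k\<close> in
        \<open>auto simp: skel_vertices_cut_polytope\<close>)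
qed

end

theorem theorem11:
  fixes k :: nat and V :: "nat \<Rightarrow> ('v::finite) set"
  assumes "k \<ge> 2"
    and "\<And>i j. i < k \<Longrightarrow> j < k \<Longrightarrow> i \<noteq> j \<Longrightarrow> V i \<inter> V j = {}"
    and "\<And>i. i < k \<Longrightarrow> card (V i) \<ge> 2"
  shows "skel_diameter (cut_polytope (\<Union>i<k. V i) (multipartite_edges k V)) = 2"
proof -
  interpret complete_multipartite k V
    using assms by unfold_locales
  show ?thesis by (rule skel_diameter_cut_polytope)
qed

end
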